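(* Let $P$ be an irreducible semi-isotropic transition matrix on $\mathbb T=\mathbb T_q$, let $\mu$ be the associated probability measure on $\Gamma=\mathrm{Aff}(\mathbb T)$, and let $\nu$ be a $\mu$-invariant Radon measure on $\partial^*\mathbb T$. Then for all $k\ge 0$, $r\ge1$ and every $y\in T_{k,r}$, $$\nu\big(\Omega_0(y)\big)=\nu(\Omega_k)/|T_{k,r}|.$$
   Context: Tree notation: $\mathbb T=\mathbb T_q$ ($q\ge2$) is the homogeneous tree of degree $q+1$ with graph metric $d$, a fixed end $\omega$ and a root $o$. Each vertex $x$ has a unique neighbour $x^-$ (its predecessor) on the geodesic ray from $x$ to $\omega$. $\mathrm{hor}(o)=0$, $\mathrm{hor}(x)=\mathrm{hor}(x^-)+1$. Ancestors of $x$: $x,x^-,(x^-)^-,\dots$; $x\curlywedge y$ is the common ancestor of $x,y$ with maximal $\mathrm{hor}$; $\mathrm{up}(x,y)=\mathrm{hor}(x)-\mathrm{hor}(x\curlywedge y)$. $\partial\mathbb T$ is the space of ends, $\partial^*\mathbb T=\partial\mathbb T\setminus\{\omega\}$. For $\xi\in\partial^*\mathbb T$, $x\curlywedge\xi$ is the vertex of the bi-infinite geodesic from $\omega$ to $\xi$ which is an ancestor of $x$ and has maximal $\mathrm{hor}$, and $\mathrm{up}(x,\xi)=\mathrm{hor}(x)-\mathrm{hor}(x\curlywedge\xi)$. A transition matrix $P$ on $\mathbb T$ is semi-isotropic if $p(x,y)$ depends only on $(\mathrm{up}(x,y),\mathrm{up}(y,x))$. Sets: $T_{k,r}(x)=\{y:\mathrm{up}(x,y)=k,\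 \mathrm{up}(y,x)=r\}$, $\Omega_k(x)=\{\eta\in\partial^*\mathbb T:\mathrm{up}(x,\eta)=k\}$; $T_{k,r}=T_{k,r}(o)$, $\Omega_k=\Omega_k(o)$. Group: $\Gamma=\mathrm{Aff}(\mathbb T)$ is the group of all automorphisms of $\mathbb T$ fixing $\omega$ (locally compact, totally disconnected, acting transitively on $\mathbb T$ and on $\partial^*\mathbb T$); $dg$ is left Haar measure normalized so that the stabilizer $\Gamma_o$ of $o$ has measure $1$; $\mu(dg)=p(o,go)\,dg$. For a Radon measure $\nu$ on $\partial^*\mathbb T$, $\mu*\nu(E)=\int_\Gamma\nu(g^{-1}E)\,\mu(dg)$; $\nu$ is $\mu$-invariant if $\mu*\nu=\nu$. *)

theory Defs
  imports "HOL-Analysis.Analysis"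
begin

text \<open>The tree is given by its vertex type 'v and the predecessor map pred (x^- = pred x);
  its edges are the pairs {x, pred x}.  This is exactly the homogeneous tree T_q together with the end omega
  represented by the rays x, pred x, pred (pred x), ...\<close>

definition tree_with_end :: "nat \<Rightarrow> ('v \<Rightarrow> 'v) \<Rightarrow> bool" where
  "tree_with_end q pred \<longleftrightarrow>
     (\<forall>x. finite {y. pred y = x} \<and> card {y. pred y = x} = q) \<and>
     (\<forall>x n. n > 0 \<longrightarrow> (pred ^^ n) x \<noteq> x) \<and>
     (\<forall>x y. \<exists>m n. (pred ^^ m) x = (pred ^^ n) y)"

definition is_hor :: "('v \<Rightarrow> 'v) \<Rightarrow> 'v \<Rightarrow> ('v \<Rightarrow> int) \<Rightarrow> bool" where
  "is_hor pred rt hor \<longleftrightarrow> hor rt = 0 \<and> (\<forall>x. hor x = hor (pred x) + 1)"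

definition anc :: "('v \<Rightarrow> 'v) \<Rightarrow> 'v \<Rightarrow> 'v \<Rightarrow> bool" where
  "anc pred x a \<longleftrightarrow> (\<exists>n. (pred ^^ n) x = a)"

definition wedge :: "('v \<Rightarrow> 'v) \<Rightarrow> ('v \<Rightarrow> int) \<Rightarrow> 'v \<Rightarrow> 'v \<Rightarrow> 'v" where
  "wedge pred hor x y = (THE a. anc pred x a \<and> anc pred y a \<and>
      (\<forall>b. anc pred x b \<and> anc pred y b \<longrightarrow> hor b \<le> hor a))"

definition up :: "('v \<Rightarrow> 'v) \<Rightarrow> ('v \<Rightarrow> int) \<Rightarrow> 'v \<Rightarrow> 'v \<Rightarrow> nat" where
  "up pred hor x y = nat (hor x - hor (wedge pred hor x y))"

definition Tkr :: "('v \<Rightarrow> 'v) \<Rightarrow> ('v \<Rightarrow> int) \<Rightarrow> nat \<Rightarrow> nat \<Rightarrow> 'v \<Rightarrow> 'v set" where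
  "Tkr pred hor k r x = {y. up pred hor x y = k \<and> up pred hor y x = r}"

text \<open>An end xi \<noteq> omega is identified with the vertex set of the bi-infinite geodesic
  from omega to xi: a nonempty set of vertices, closed under pred, totally ordered by the
  ancestor relation, and in which every vertex has a successor.\<close>
definition ends_star :: "('v \<Rightarrow> 'v) \<Rightarrow> 'v set set" where
  "ends_star pred = {S. S \<noteq> {} \<and> (\<forall>x\<in>S. pred x \<in> S) \<and>
      (\<forall>x\<in>S. \<forall>y\<in>S. anc pred x y \<or> anc pred y x) \<and> (\<forall>x\<in>S. \<exists>y\<in>S. pred y = x)}"

definition wedge_end :: "('v \<Rightarrow> 'v) \<Rightarrow> ('v \<Rightarrow> int) \<Rightarrow> 'v \<Rightarrow> 'v set \<Rightarrow> 'v" where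
  "wedge_end pred hor x \<xi> = (THE a. a \<in> \<xi> \<and> anc pred x a \<and>
      (\<forall>b\<in>\<xi>. anc pred x b \<longrightarrow> hor b \<le> hor a))"

definition up_end :: "('v \<Rightarrow> 'v) \<Rightarrow> ('v \<Rightarrow> int) \<Rightarrow> 'v \<Rightarrow> 'v set \<Rightarrow> nat" where
  "up_end pred hor x \<xi> = nat (hor x - hor (wedge_end pred hor x \<xi>))"

definition Omega :: "('v \<Rightarrow> 'v) \<Rightarrow> ('v \<Rightarrow> int) \<Rightarrow> nat \<Rightarrow> 'v \<Rightarrow> 'v set set" where
  "Omega pred hor k x = {\<eta> \<in> ends_star pred. up_end pred hor x \<eta> = k}"

text \<open>The Borel sigma-algebra of \<partial>*T: the topology of \<partial>*T has the countable basis of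
  compact open sets {\<xi>. x lies on the geodesic omega--xi}, x a vertex.\<close>
definition ends_borel :: "('v \<Rightarrow> 'v) \<Rightarrow> 'v set set set" where
  "ends_borel pred = sigma_sets (ends_star pred) (range (\<lambda>x. {\<xi> \<in> ends_star pred. x \<in> \<xi>}))"

text \<open>Radon measures on \<partial>*T (a locally compact, second countable Hausdorff space):
  Borel measures that are finite on the compact open basic sets (hence locally finite).\<close>
definition radon_ends :: "('v \<Rightarrow> 'v) \<Rightarrow> 'v set measure \<Rightarrow> bool" where
  "radon_ends pred \<nu> \<longleftrightarrow> space \<nu> = ends_star pred \<and> sets \<nu> = ends_borel pred \<and>
      (\<forall>x. emeasure \<nu> {\<xi> \<in> ends_star pred. x \<in> \<xi>} < \<infinity>)"

text \<open>Automorphisms of T fixing omega are exactly the bijections commuting with pred.\<close>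
definition Aff :: "('v \<Rightarrow> 'v) \<Rightarrow> ('v \<Rightarrow> 'v) set" where
  "Aff pred = {g. bij g \<and> (\<forall>x. g (pred x) = pred (g x))}"

text \<open>Borel sigma-algebra of Aff(T) for the topology of pointwise convergence
  (countable subbasis {g. g x = y}).\<close>
definition Aff_borel :: "('v \<Rightarrow> 'v) \<Rightarrow> ('v \<Rightarrow> 'v) set set" where
  "Aff_borel pred = sigma_sets (Aff pred) {{g \<in> Aff pred. g x = y} | x y. True}"

definition haar :: "('v \<Rightarrow> 'v) \<Rightarrow> 'v \<Rightarrow> ('v \<Rightarrow> 'v) measure \<Rightarrow> bool" where
  "haar pred rt H \<longleftrightarrow> space H = Aff pred \<and> sets H = Aff_borel pred \<and>
      (\<forall>g\<in>Aff pred. \<forall>A\<in>sets H. emeasure H ((\<lambda>h. g \<circ> h) ` A) = emeasure H A) \<and>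
      emeasure H {g \<in> Aff pred. g rt = rt} = 1"

definition stochastic :: "('v \<Rightarrow> 'v \<Rightarrow> real) \<Rightarrow> bool" where
  "stochastic p \<longleftrightarrow> (\<forall>x y. p x y \<ge> 0) \<and> (\<forall>x. (p x has_sum 1) UNIV)"

fun mpow :: "('v \<Rightarrow> 'v \<Rightarrow> real) \<Rightarrow> nat \<Rightarrow> 'v \<Rightarrow> 'v \<Rightarrow> real" where
  "mpow p 0 x y = (if x = y then 1 else 0)"
| "mpow p (Suc n) x y = (\<Sum>\<^sub>\<infinity>z. p x z * mpow p n z y)"

definition irreducible_P :: "('v \<Rightarrow> 'v \<Rightarrow> real) \<Rightarrow> bool" where
  "irreducible_P p \<longleftrightarrow> (\<forall>x y. \<exists>n. mpow p n x y > 0)"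

definition semi_isotropic :: "('v \<Rightarrow> 'v) \<Rightarrow> ('v \<Rightarrow> int) \<Rightarrow> ('v \<Rightarrow> 'v \<Rightarrow> real) \<Rightarrow> bool" where
  "semi_isotropic pred hor p \<longleftrightarrow>
     (\<forall>x y x' y'. up pred hor x y = up pred hor x' y' \<and> up pred hor y x = up pred hor y' x'
        \<longrightarrow> p x y = p x' y')"

text \<open>mu(dg) = p(o, g o) dg; (mu * nu)(E) = \<integral> nu(g^{-1} E) mu(dg), where g acts on
  \<partial>*T by mapping geodesics: g \<cdot> \<xi> = g ` \<xi>.\<close>
definition conv :: "('v \<Rightarrow> 'v) \<Rightarrow> 'v \<Rightarrow> ('v \<Rightarrow> 'v \<Rightarrow> real) \<Rightarrow> ('v \<Rightarrow> 'v) measure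
      \<Rightarrow> 'v set measure \<Rightarrow> 'v set set \<Rightarrow> ennreal" where
  "conv pred rt p H \<nu> E =
     (\<integral>\<^sup>+ g. emeasure \<nu> ((\<lambda>\<xi>. g ` \<xi>) -` E \<inter> ends_star pred) * ennreal (p rt (g rt)) \<partial>H)"

definition mu_invariant :: "('v \<Rightarrow> 'v) \<Rightarrow> 'v \<Rightarrow> ('v \<Rightarrow> 'v \<Rightarrow> real) \<Rightarrow> ('v \<Rightarrow> 'v) measure
      \<Rightarrow> 'v set measure \<Rightarrow> bool" where
  "mu_invariant pred rt p H \<nu> \<longleftrightarrow> (\<forall>E \<in> sets \<nu>. conv pred rt p H \<nu> E = emeasure \<nu> E)"

end

theory Submission
  imports Defs
begin

text \<open>
  Two vertices \<open>y, y'\<close> of \<open>T\<^sub>k\<^sub>,\<^sub>r\<close> with \<open>r \<ge> 1\<close> have the common ancestor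
  \<open>(pred ^^ r) y = (pred ^^ k) o\<close>. An automorphism moving \<open>y\<close> to \<open>y'\<close> is obtained by swapping
  sibling subtrees below that ancestor, none of which contains \<open>o\<close>; so the stabilizer of \<open>o\<close> in
  \<open>Aff(T)\<close> acts transitively on \<open>T\<^sub>k\<^sub>,\<^sub>r\<close>. For \<open>h\<close> in this stabilizer, \<open>\<mu>\<close>-invariance, the
  substitution \<open>g \<mapsto> h \<circ> g\<close> in the Haar integral and semi-isotropy (\<open>p(o, h g o) = p(o, g o)\<close>)
  give \<open>\<nu>(\<Omega>\<^sub>0(h y)) = \<nu>(\<Omega>\<^sub>0(y))\<close>. Since \<open>\<Omega>\<^sub>k\<close> is the disjoint union of the finitely many
  sets \<open>\<Omega>\<^sub>0(y)\<close>, \<open>y \<in> T\<^sub>k\<^sub>,\<^sub>r\<close>, each of them has measure \<open>\<nu>(\<Omega>\<^sub>k) / |T\<^sub>k\<^sub>,\<^sub>r|\<close>.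
\<close>

lemma anc_refl [simp]: "anc pred x x"
  unfolding anc_def by (metis funpow_0)

lemma anc_funpow [simp]: "anc pred x ((pred ^^ n) x)"
  unfolding anc_def by blast

lemma anc_pred [simp]: "anc pred x (pred x)"
  using anc_funpow[of pred x 1] by simp

lemma anc_trans: "anc pred x a \<Longrightarrow> anc pred a b \<Longrightarrow> anc pred x b"
  unfolding anc_def by (metis funpow_add comp_apply)

lemma AffD:
  assumes "h \<in> Aff pred"
  shows "bij h" and "h (pred x) = pred (h x)"
  using assms unfolding Aff_def by auto

lemma Aff_comp: "h \<in> Aff pred \<Longrightarrow> g \<in> Aff pred \<Longrightarrow> h \<circ> g \<in> Aff pred"
  unfolding Aff_def by (auto intro: bij_comp)

lemma Aff_inv:
  assumes h: "h \<in> Aff pred"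
  shows "inv h \<in> Aff pred"
proof -
  have "h (pred (inv h x)) = pred x" for x
    using AffD[OF h] by (simp add: bij_is_surj surj_f_inv_f)
  then have "inv h (pred x) = pred (inv h x)" for x
    using AffD(1)[OF h] by (metis bij_inv_eq_iff)
  then show ?thesis
    unfolding Aff_def using bij_imp_bij_inv[OF AffD(1)[OF h]] by auto
qed

lemma Aff_comp_inv_cancel:
  assumes "h \<in> Aff pred"
  shows "h \<circ> (inv h \<circ> g) = g" and "inv h \<circ> (h \<circ> g) = g"
  using AffD(1)[OF assms] by (auto simp: fun_eq_iff bij_is_inj bij_is_surj inv_f_f surj_f_inv_f)

lemma id_in_Aff: "id \<in> Aff pred"
  unfolding Aff_def by auto

lemma Aff_funpow_pred: "h \<in> Aff pred \<Longrightarrow> h ((pred ^^ n) x) = (pred ^^ n) (h x)"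
  by (induction n) (auto simp: Aff_def)

lemma Aff_anc_iff: "h \<in> Aff pred \<Longrightarrow> anc pred (h x) (h a) \<longleftrightarrow> anc pred x a"
  unfolding anc_def by (metis Aff_funpow_pred AffD(1) bij_is_inj injD)

lemma ends_starD:
  assumes "\<xi> \<in> ends_star pred"
  shows "\<xi> \<noteq> {}" and "x \<in> \<xi> \<Longrightarrow> pred x \<in> \<xi>"
    and "x \<in> \<xi> \<Longrightarrow> y \<in> \<xi> \<Longrightarrow> anc pred x y \<or> anc pred y x"
    and "x \<in> \<xi> \<Longrightarrow> \<exists>y\<in>\<xi>. pred y = x"
  using assms unfolding ends_star_def by auto

lemma Aff_image_ends_star:
  assumes g: "g \<in> Aff pred" and \<xi>: "\<xi> \<in> ends_star pred"
  shows "g ` \<xi> \<in> ends_star pred"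
proof -
  have "pred (g x) \<in> g ` \<xi>" if "x \<in> \<xi>" for x
    using ends_starD(2)[OF \<xi> that] AffD(2)[OF g] by (metis image_eqI)
  moreover have "\<exists>y\<in>g ` \<xi>. pred y = g x" if "x \<in> \<xi>" for x
    using ends_starD(4)[OF \<xi> that] AffD(2)[OF g] by force
  ultimately show ?thesis
    using ends_starD(1,3)[OF \<xi>] Aff_anc_iff[OF g] unfolding ends_star_def by auto
qed

section \<open>Left translations and Haar measure\<close>

text \<open>No measurability of \<open>f\<close> is assumed (the integrand in \<^const>\<open>conv\<close> is not known to be
  measurable): composing with \<open>L\<close> maps the simple functions below \<open>f\<close> to simple functions below
  \<open>f \<circ> L\<close> with the same integral.\<close>

lemma nn_integral_le_comp_measure_preserving:
  assumes onto: "L ` space M = space M"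
    and vimage: "\<And>A. A \<in> sets M \<Longrightarrow> L -` A \<inter> space M \<in> sets M"
    and preserving: "\<And>A. A \<in> sets M \<Longrightarrow> emeasure M (L -` A \<inter> space M) = emeasure M A"
  shows "integral\<^sup>N M f \<le> (\<integral>\<^sup>+ x. f (L x) \<partial>M)"
  unfolding nn_integral_def
proof (rule SUP_least)
  fix g assume g: "g \<in> {g. simple_function M g \<and> g \<le> f}"
  have range: "(\<lambda>x. g (L x)) ` space M = g ` space M"
    using image_image[of g L "space M"] onto by simp
  have into: "L x \<in> space M" if "x \<in> space M" for x
    using onto that by blast
  have level_set: "(\<lambda>x. g (L x)) -` {c} \<inter> space M = L -` (g -` {c} \<inter> space M) \<inter> space M" for c
    using into by auto
  have g_level_set: "g -` {c} \<inter> space M \<in> sets M" if "c \<in> g ` space M" for c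
    using g that unfolding simple_function_def by auto
  have "simple_function M (\<lambda>x. g (L x))"
    unfolding simple_function_def range level_set
    using g g_level_set vimage by (blast intro: simple_functionD(1))
  moreover have "(\<lambda>x. g (L x)) \<le> (\<lambda>x. f (L x))"
    using g by (auto simp: le_fun_def)
  moreover have "integral\<^sup>S M g = integral\<^sup>S M (\<lambda>x. g (L x))"
    unfolding simple_integral_def range level_set
    using g_level_set preserving by (intro sum.cong) (simp_all del: vimage_Int)
  ultimately show "integral\<^sup>S M g \<le> (SUP g\<in>{g. simple_function M g \<and> g \<le> (\<lambda>x. f (L x))}. integral\<^sup>S M g)"
    by (intro SUP_upper2[of "\<lambda>x. g (L x)"]) auto
qed

lemma haarD:
  assumes "haar pred rt H"
  shows "space H = Aff pred" and "sets H = Aff_borel pred"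
    and "g \<in> Aff pred \<Longrightarrow> A \<in> sets H \<Longrightarrow> emeasure H ((\<lambda>h. g \<circ> h) ` A) = emeasure H A"
  using assms unfolding haar_def by auto

lemma Aff_left_translation_measurable:
  assumes H: "haar pred rt H" and k: "k \<in> Aff pred"
  shows "(\<lambda>g. k \<circ> g) \<in> measurable H H"
proof (rule measurable_sigma_sets)
  show "sets H = sigma_sets (Aff pred) {{g \<in> Aff pred. g x = y} | x y. True}"
    using haarD(2)[OF H] unfolding Aff_borel_def .
  show "(\<lambda>g. k \<circ> g) \<in> space H \<rightarrow> Aff pred"
    using haarD(1)[OF H] Aff_comp[OF k] by auto
  fix A assume "A \<in> {{g \<in> Aff pred. g x = y} | x y. True}"
  then obtain x y where A: "A = {g \<in> Aff pred. g x = y}"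
    by blast
  have "{g \<in> Aff pred. g x = inv k y} \<in> sets H"
    unfolding haarD(2)[OF H] Aff_borel_def by (intro sigma_sets.Basic CollectI exI[of _ x] exI[of _ "inv k y"]) simp
  moreover have "(\<lambda>g. k \<circ> g) -` A \<inter> space H = {g \<in> Aff pred. g x = inv k y}"
    unfolding A haarD(1)[OF H]
    using Aff_comp[OF k] AffD(1)[OF k] by (auto simp: bij_is_inj bij_is_surj inv_f_f surj_f_inv_f)
  ultimately show "(\<lambda>g. k \<circ> g) -` A \<inter> space H \<in> sets H"
    by simp
qed blast

lemma haar_left_translation:
  assumes H: "haar pred rt H" and k: "k \<in> Aff pred"
  shows "(\<lambda>g. k \<circ> g) ` space H = space H"
    and "A \<in> sets H \<Longrightarrow> (\<lambda>g. k \<circ> g) -` A \<inter> space H \<in> sets H"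
    and "A \<in> sets H \<Longrightarrow> emeasure H ((\<lambda>g. k \<circ> g) -` A \<inter> space H) = emeasure H A"
proof -
  show "(\<lambda>g. k \<circ> g) ` space H = space H"
  proof (intro equalityI subsetI)
    fix g assume "g \<in> space H"
    then show "g \<in> (\<lambda>g. k \<circ> g) ` space H"
      using haarD(1)[OF H] Aff_comp[OF Aff_inv[OF k]] Aff_comp_inv_cancel(1)[OF k] by (metis image_eqI)
  qed (use haarD(1)[OF H] Aff_comp[OF k] in auto)
  show "A \<in> sets H \<Longrightarrow> (\<lambda>g. k \<circ> g) -` A \<inter> space H \<in> sets H"
    using Aff_left_translation_measurable[OF H k] by (rule measurable_sets)
  show "emeasure H ((\<lambda>g. k \<circ> g) -` A \<inter> space H) = emeasure H A" if A: "A \<in> sets H"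
  proof -
    have "(\<lambda>g. k \<circ> g) -` A \<inter> space H = (\<lambda>g. inv k \<circ> g) ` A"
    proof (intro equalityI subsetI)
      fix g assume "g \<in> (\<lambda>g. k \<circ> g) -` A \<inter> space H"
      then show "g \<in> (\<lambda>g. inv k \<circ> g) ` A"
        using Aff_comp_inv_cancel(2)[OF k] by (metis IntD1 image_eqI vimageD)
    next
      fix g assume "g \<in> (\<lambda>g. inv k \<circ> g) ` A"
      then show "g \<in> (\<lambda>g. k \<circ> g) -` A \<inter> space H"
        using sets.sets_into_space[OF A] haarD(1)[OF H] Aff_comp[OF Aff_inv[OF k]]
        by (auto simp: Aff_comp_inv_cancel(1)[OF k])
    qed
    then show ?thesis
      using haarD(3)[OF H Aff_inv[OF k] A] by simp
  qed
qed

lemma nn_integral_haar_left_translation: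
  assumes H: "haar pred rt H" and k: "k \<in> Aff pred"
  shows "integral\<^sup>N H f = (\<integral>\<^sup>+ g. f (k \<circ> g) \<partial>H)"
proof -
  have "integral\<^sup>N H f \<le> (\<integral>\<^sup>+ g. f (k \<circ> g) \<partial>H)"
    using haar_left_translation[OF H k] by (rule nn_integral_le_comp_measure_preserving)
  moreover have "(\<integral>\<^sup>+ g. f (k \<circ> g) \<partial>H) \<le> (\<integral>\<^sup>+ g. f (k \<circ> (inv k \<circ> g)) \<partial>H)"
    using haar_left_translation[OF H Aff_inv[OF k]] by (rule nn_integral_le_comp_measure_preserving)
  ultimately show ?thesis
    by (intro antisym) (simp_all add: Aff_comp_inv_cancel(1)[OF k])
qed

locale horocyclic_tree =
  fixes q :: nat and pred :: "'v \<Rightarrow> 'v" and rt :: 'v and hor :: "'v \<Rightarrow> int"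
  assumes tree: "tree_with_end q pred" and hor: "is_hor pred rt hor"
begin

lemma hor_pred: "hor (pred x) = hor x - 1"
  using hor unfolding is_hor_def by (metis add_diff_cancel_right')

lemma hor_funpow_pred: "hor ((pred ^^ n) x) = hor x - int n"
  by (induction n) (auto simp: hor_pred)

lemma finite_children: "finite {y. pred y = x}"
  and card_children: "card {y. pred y = x} = q"
  using tree unfolding tree_with_end_def by auto

lemma ex_common_ancestor: "\<exists>m n. (pred ^^ m) x = (pred ^^ n) y"
  using tree unfolding tree_with_end_def by auto

lemma anc_hor_le: "anc pred x a \<Longrightarrow> hor a \<le> hor x"
  unfolding anc_def using hor_funpow_pred by auto

lemma anc_eq_funpow_pred: "anc pred x a \<Longrightarrow> a = (pred ^^ nat (hor x - hor a)) x"
  unfolding anc_def using hor_funpow_pred by auto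

lemma anc_eq_if_hor_eq: "anc pred x a \<Longrightarrow> anc pred x b \<Longrightarrow> hor a = hor b \<Longrightarrow> a = b"
  by (metis anc_eq_funpow_pred)

lemma ex_greatest_anc:
  assumes "P ((pred ^^ m) x)"
  obtains a where "anc pred x a" "P a" "\<And>b. anc pred x b \<Longrightarrow> P b \<Longrightarrow> hor b \<le> hor a"
proof -
  define n where "n = (LEAST k. P ((pred ^^ k) x))"
  have "P ((pred ^^ n) x)"
    unfolding n_def using assms by (rule LeastI)
  moreover have "hor b \<le> hor ((pred ^^ n) x)" if b: "anc pred x b" "P b" for b
  proof -
    obtain j where j: "(pred ^^ j) x = b"
      using b(1) unfolding anc_def by blast
    have "n \<le> j"
      unfolding n_def by (rule Least_le) (use b j in simp)
    then show ?thesis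
      using j hor_funpow_pred by auto
  qed
  ultimately show ?thesis
    using that[of "(pred ^^ n) x"] by simp
qed

lemma wedge_eqI:
  assumes "anc pred x a" "anc pred y a" "\<And>b. anc pred x b \<Longrightarrow> anc pred y b \<Longrightarrow> hor b \<le> hor a"
  shows "wedge pred hor x y = a"
  unfolding wedge_def
proof (rule the_equality)
  fix a' assume "anc pred x a' \<and> anc pred y a' \<and> (\<forall>b. anc pred x b \<and> anc pred y b \<longrightarrow> hor b \<le> hor a')"
  then show "a' = a"
    using assms by (meson anc_eq_if_hor_eq order_antisym)
qed (use assms in blast)

lemma
  shows anc_wedge_left: "anc pred x (wedge pred hor x y)"
    and anc_wedge_right: "anc pred y (wedge pred hor x y)"
    and hor_le_wedge: "anc pred x b \<Longrightarrow> anc pred y b \<Longrightarrow> hor b \<le> hor (wedge pred hor x y)"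
proof -
  obtain m n where "(pred ^^ m) x = (pred ^^ n) y"
    using ex_common_ancestor by blast
  then have "anc pred y ((pred ^^ m) x)"
    by simp
  then obtain a where a: "anc pred x a" "anc pred y a" "\<And>b. anc pred x b \<Longrightarrow> anc pred y b \<Longrightarrow> hor b \<le> hor a"
    by (rule ex_greatest_anc) blast
  moreover from this have "wedge pred hor x y = a"
    by (intro wedge_eqI)
  ultimately show "anc pred x (wedge pred hor x y)" "anc pred y (wedge pred hor x y)"
    "anc pred x b \<Longrightarrow> anc pred y b \<Longrightarrow> hor b \<le> hor (wedge pred hor x y)"
    by simp_all
qed

lemma wedge_commute: "wedge pred hor x y = wedge pred hor y x"
  by (rule wedge_eqI) (use anc_wedge_left anc_wedge_right hor_le_wedge in auto)

lemma Aff_hor_eq: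
  assumes h: "h \<in> Aff pred" "h z = z"
  shows "hor (h x) = hor x"
proof -
  define shift where "shift v = hor (h v) - hor v" for v
  have "shift ((pred ^^ n) v) = shift v" for n v
    unfolding shift_def using Aff_funpow_pred[OF h(1)] hor_funpow_pred by simp
  moreover obtain m n where "(pred ^^ m) x = (pred ^^ n) z"
    using ex_common_ancestor by blast
  ultimately have "shift x = shift z"
    by metis
  then show ?thesis
    using h(2) unfolding shift_def by simp
qed

lemma Aff_wedge:
  assumes h: "h \<in> Aff pred" "h z = z"
  shows "wedge pred hor (h x) (h y) = h (wedge pred hor x y)"
proof (rule wedge_eqI)
  show "anc pred (h x) (h (wedge pred hor x y))" "anc pred (h y) (h (wedge pred hor x y))"
    using Aff_anc_iff[OF h(1)] anc_wedge_left anc_wedge_right by auto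
  fix b assume b: "anc pred (h x) b" "anc pred (h y) b"
  obtain b' where b': "b = h b'"
    using bij_is_surj[OF AffD(1)[OF h(1)]] by (metis surjD)
  then have "anc pred x b'" "anc pred y b'"
    using b Aff_anc_iff[OF h(1)] by auto
  then show "hor b \<le> hor (h (wedge pred hor x y))"
    using hor_le_wedge b' Aff_hor_eq[OF h] by simp
qed

lemma Aff_up:
  assumes "h \<in> Aff pred" "h z = z"
  shows "up pred hor (h x) (h y) = up pred hor x y"
  unfolding up_def Aff_wedge[OF assms] Aff_hor_eq[OF assms] ..

lemma ends_star_funpow_pred: "\<xi> \<in> ends_star pred \<Longrightarrow> z \<in> \<xi> \<Longrightarrow> (pred ^^ n) z \<in> \<xi>"
  by (induction n) (simp_all add: ends_starD(2))

lemma ends_star_anc: "\<xi> \<in> ends_star pred \<Longrightarrow> z \<in> \<xi> \<Longrightarrow> anc pred z b \<Longrightarrow> b \<in> \<xi>"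
  unfolding anc_def using ends_star_funpow_pred by blast

lemma ends_star_ex_descendant:
  assumes "\<xi> \<in> ends_star pred" "w \<in> \<xi>"
  shows "\<exists>y\<in>\<xi>. (pred ^^ n) y = w"
proof (induction n)
  case (Suc n)
  then obtain y' where "y' \<in> \<xi>" "(pred ^^ n) y' = w"
    by auto
  moreover obtain y where "y \<in> \<xi>" "pred y = y'"
    using ends_starD(4)[OF assms(1) \<open>y' \<in> \<xi>\<close>] by auto
  ultimately show ?case
    by (intro bexI[of _ y]) (auto simp: funpow_Suc_right simp del: funpow.simps)
qed (use assms in auto)

lemma ends_star_hor_inj:
  assumes "\<xi> \<in> ends_star pred" "a \<in> \<xi>" "b \<in> \<xi>" "hor a = hor b"
  shows "a = b"
  using ends_starD(3)[OF assms(1-3)] assms(4) by (metis anc_eq_if_hor_eq anc_refl)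

lemma wedge_end_eqI:
  assumes "\<xi> \<in> ends_star pred" "a \<in> \<xi>" "anc pred x a" "\<And>b. b \<in> \<xi> \<Longrightarrow> anc pred x b \<Longrightarrow> hor b \<le> hor a"
  shows "wedge_end pred hor x \<xi> = a"
  unfolding wedge_end_def
proof (rule the_equality)
  fix a' assume "a' \<in> \<xi> \<and> anc pred x a' \<and> (\<forall>b\<in>\<xi>. anc pred x b \<longrightarrow> hor b \<le> hor a')"
  then show "a' = a"
    using assms by (meson anc_eq_if_hor_eq order_antisym)
qed (use assms in blast)

lemma
  assumes \<xi>: "\<xi> \<in> ends_star pred"
  shows wedge_end_mem: "wedge_end pred hor x \<xi> \<in> \<xi>"
    and anc_wedge_end: "anc pred x (wedge_end pred hor x \<xi>)"
    and hor_le_wedge_end: "b \<in> \<xi> \<Longrightarrow> anc pred x b \<Longrightarrow> hor b \<le> hor (wedge_end pred hor x \<xi>)"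
proof -
  obtain z where "z \<in> \<xi>"
    using ends_starD(1)[OF \<xi>] by auto
  moreover obtain m n where "(pred ^^ m) x = (pred ^^ n) z"
    using ex_common_ancestor by blast
  ultimately have "(pred ^^ m) x \<in> \<xi>"
    using ends_star_funpow_pred[OF \<xi>] by simp
  then obtain a where a: "anc pred x a" "a \<in> \<xi>" "\<And>b. anc pred x b \<Longrightarrow> b \<in> \<xi> \<Longrightarrow> hor b \<le> hor a"
    by (rule ex_greatest_anc) blast
  moreover from this have "wedge_end pred hor x \<xi> = a"
    by (intro wedge_end_eqI[OF \<xi>]) simp_all
  ultimately show "wedge_end pred hor x \<xi> \<in> \<xi>" "anc pred x (wedge_end pred hor x \<xi>)"
    "b \<in> \<xi> \<Longrightarrow> anc pred x b \<Longrightarrow> hor b \<le> hor (wedge_end pred hor x \<xi>)"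
    by simp_all
qed

definition ends_through :: "'v \<Rightarrow> 'v set set" where
  "ends_through x = {\<xi> \<in> ends_star pred. x \<in> \<xi>}"

lemma ends_through_in_sets:
  assumes "radon_ends pred \<nu>"
  shows "ends_through x \<in> sets \<nu>"
proof -
  have "ends_through x \<in> range (\<lambda>x. {\<xi> \<in> ends_star pred. x \<in> \<xi>})"
    unfolding ends_through_def by (rule rangeI)
  then show ?thesis
    using assms unfolding radon_ends_def ends_borel_def by (simp add: sigma_sets.Basic)
qed

lemma Omega_0_eq_ends_through: "Omega pred hor 0 x = ends_through x"
proof -
  have "up_end pred hor x \<xi> = 0 \<longleftrightarrow> x \<in> \<xi>" if \<xi>: "\<xi> \<in> ends_star pred" for \<xi>
  proof
    assume "up_end pred hor x \<xi> = 0"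
    then have "hor x = hor (wedge_end pred hor x \<xi>)"
      using anc_hor_le[OF anc_wedge_end[OF \<xi>, of x]] unfolding up_end_def by simp
    then have "x = wedge_end pred hor x \<xi>"
      using anc_eq_if_hor_eq[OF anc_refl anc_wedge_end[OF \<xi>]] by blast
    then show "x \<in> \<xi>"
      using wedge_end_mem[OF \<xi>] by metis
  next
    assume "x \<in> \<xi>"
    then have "wedge_end pred hor x \<xi> = x"
      using wedge_end_eqI[OF \<xi> _ anc_refl] anc_hor_le by blast
    then show "up_end pred hor x \<xi> = 0"
      unfolding up_end_def by simp
  qed
  then show ?thesis
    unfolding Omega_def ends_through_def by blast
qed

section \<open>Decomposition of \<open>\<Omega>\<^sub>k\<close> along \<open>T\<^sub>k\<^sub>,\<^sub>r\<close>\<close>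

lemma mem_Tkr_iff:
  "y \<in> Tkr pred hor k r x \<longleftrightarrow>
     hor (wedge pred hor x y) = hor x - int k \<and> hor y = hor (wedge pred hor x y) + int r"
proof -
  have "hor (wedge pred hor x y) \<le> hor x" "hor (wedge pred hor x y) \<le> hor y"
    using anc_hor_le anc_wedge_left anc_wedge_right by blast+
  then show ?thesis
    unfolding Tkr_def up_def using wedge_commute[of y x] by auto
qed

lemma funpow_pred_Tkr:
  assumes y: "y \<in> Tkr pred hor k r x"
  shows "(pred ^^ r) y = (pred ^^ k) x"
proof -
  have "wedge pred hor x y = (pred ^^ k) x"
    using y mem_Tkr_iff anc_eq_if_hor_eq[OF anc_wedge_left anc_funpow] hor_funpow_pred by simp
  moreover have "wedge pred hor x y = (pred ^^ r) y"
    using y mem_Tkr_iff anc_eq_if_hor_eq[OF anc_wedge_right anc_funpow] hor_funpow_pred by simp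
  ultimately show ?thesis
    by simp
qed

lemma finite_descendants: "finite {z. (pred ^^ n) z = c}"
proof (induction n)
  case (Suc n)
  have "{z. (pred ^^ Suc n) z = c} = (\<Union>u\<in>{z. (pred ^^ n) z = c}. {z. pred z = u})"
    by (auto simp: funpow_Suc_right simp del: funpow.simps)
  then show ?case
    using Suc finite_children by auto
qed simp

lemma finite_Tkr: "finite (Tkr pred hor k r x)"
  by (rule finite_subset[OF _ finite_descendants[of r "(pred ^^ k) x"]]) (use funpow_pred_Tkr in auto)

lemma ex_Tkr_mem_if_Omega:
  assumes \<eta>: "\<eta> \<in> Omega pred hor k x"
  shows "\<exists>y\<in>Tkr pred hor k r x. y \<in> \<eta>"
proof -
  define w where "w = wedge_end pred hor x \<eta>"
  have \<eta>_end: "\<eta> \<in> ends_star pred" and "up_end pred hor x \<eta> = k"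
    using \<eta> unfolding Omega_def by auto
  moreover have "hor w \<le> hor x"
    using anc_hor_le[OF anc_wedge_end[OF \<eta>_end]] unfolding w_def .
  ultimately have hor_w: "hor w = hor x - int k"
    unfolding up_end_def w_def[symmetric] by linarith
  obtain y where y: "y \<in> \<eta>" "(pred ^^ r) y = w"
    using ends_star_ex_descendant[OF \<eta>_end wedge_end_mem[OF \<eta>_end]] unfolding w_def by blast
  have "wedge pred hor x y = w"
  proof (rule wedge_eqI)
    show "anc pred x w"
      using anc_wedge_end[OF \<eta>_end] unfolding w_def .
    show "anc pred y w"
      unfolding y(2)[symmetric] by (rule anc_funpow)
    show "anc pred x b \<Longrightarrow> anc pred y b \<Longrightarrow> hor b \<le> hor w" for b
      using hor_le_wedge_end[OF \<eta>_end] ends_star_anc[OF \<eta>_end y(1)] unfolding w_def by blast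
  qed
  moreover have "hor y = hor w + int r"
    using y(2) hor_funpow_pred[of r y] by simp
  ultimately have "y \<in> Tkr pred hor k r x"
    unfolding mem_Tkr_iff using hor_w by simp
  then show ?thesis
    using y(1) by blast
qed

lemma up_end_eq_if_Tkr:
  assumes r: "r \<ge> 1" and y: "y \<in> Tkr pred hor k r x" and \<eta>: "\<eta> \<in> ends_through y"
  shows "up_end pred hor x \<eta> = k"
proof -
  define c where "c = wedge pred hor x y"
  have \<eta>_end: "\<eta> \<in> ends_star pred" and "y \<in> \<eta>"
    using \<eta> unfolding ends_through_def by auto
  have hor_c: "hor c = hor x - int k" "hor y = hor c + int r"
    using y unfolding mem_Tkr_iff c_def by auto
  have "wedge_end pred hor x \<eta> = c"
  proof (rule wedge_end_eqI[OF \<eta>_end])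
    show "c \<in> \<eta>"
      using ends_star_anc[OF \<eta>_end \<open>y \<in> \<eta>\<close> anc_wedge_right] unfolding c_def .
    show "anc pred x c"
      unfolding c_def by (rule anc_wedge_left)
    fix b assume b: "b \<in> \<eta>" "anc pred x b"
    show "hor b \<le> hor c"
    proof (cases "anc pred y b")
      case True
      then show ?thesis
        unfolding c_def by (rule hor_le_wedge[OF b(2)])
    next
      case False
      then have "anc pred b y"
        using ends_starD(3)[OF \<eta>_end b(1) \<open>y \<in> \<eta>\<close>] by blast
      then have "anc pred x y"
        using anc_trans[OF b(2)] by blast
      then have "hor y \<le> hor c"
        unfolding c_def by (rule hor_le_wedge[OF _ anc_refl])
      then show ?thesis
        using hor_c r by simp
    qed
  qed
  then show ?thesis
    unfolding up_end_def using hor_c by simp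
qed

lemma Omega_eq_UN_Tkr:
  assumes "r \<ge> 1"
  shows "Omega pred hor k x = (\<Union>y\<in>Tkr pred hor k r x. ends_through y)"
proof (intro equalityI subsetI)
  fix \<eta> assume \<eta>: "\<eta> \<in> Omega pred hor k x"
  then obtain y where "y \<in> Tkr pred hor k r x" "y \<in> \<eta>"
    using ex_Tkr_mem_if_Omega by blast
  moreover have "\<eta> \<in> ends_star pred"
    using \<eta> unfolding Omega_def by simp
  ultimately show "\<eta> \<in> (\<Union>y\<in>Tkr pred hor k r x. ends_through y)"
    unfolding ends_through_def by blast
next
  fix \<eta> assume "\<eta> \<in> (\<Union>y\<in>Tkr pred hor k r x. ends_through y)"
  then obtain y where "y \<in> Tkr pred hor k r x" "\<eta> \<in> ends_through y"
    by blast
  then have "up_end pred hor x \<eta> = k" "\<eta> \<in> ends_star pred"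
    using up_end_eq_if_Tkr[OF assms] unfolding ends_through_def by auto
  then show "\<eta> \<in> Omega pred hor k x"
    unfolding Omega_def by simp
qed

lemma disjoint_family_ends_through_Tkr: "disjoint_family_on ends_through (Tkr pred hor k r x)"
  unfolding disjoint_family_on_def
proof (intro ballI impI)
  fix y y' assume "y \<in> Tkr pred hor k r x" "y' \<in> Tkr pred hor k r x" "y \<noteq> y'"
  then have "hor y = hor y'"
    unfolding mem_Tkr_iff by simp
  then have "\<eta> \<notin> ends_through y'" if "\<eta> \<in> ends_through y" for \<eta>
    using that ends_star_hor_inj[of \<eta> y y'] \<open>y \<noteq> y'\<close> unfolding ends_through_def by auto
  then show "ends_through y \<inter> ends_through y' = {}"
    by blast
qed

section \<open>Swapping sibling subtrees\<close>

definition child :: "'v \<Rightarrow> nat \<Rightarrow> 'v" where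
  "child v = (SOME f. bij_betw f {..<q} {y. pred y = v})"

definition child_index :: "'v \<Rightarrow> nat" where
  "child_index x = inv_into {..<q} (child (pred x)) x"

lemma bij_betw_child: "bij_betw (child v) {..<q} {y. pred y = v}"
proof -
  have "\<exists>f. bij_betw f {..<q} {y. pred y = v}"
    using ex_bij_betw_nat_finite[OF finite_children] card_children by (auto simp: atLeast0LessThan)
  then show ?thesis
    unfolding child_def by (rule someI_ex)
qed

lemma pred_child: "i < q \<Longrightarrow> pred (child v i) = v"
  using bij_betw_child[of v] unfolding bij_betw_def by auto

lemma child_index_child: "i < q \<Longrightarrow> child_index (child v i) = i"
  using bij_betw_child[of v] unfolding child_index_def pred_child bij_betw_def by (simp add: inv_into_f_f)

lemma child_index_less: "child_index x < q"
  and child_child_index: "child (pred x) (child_index x) = x"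
proof -
  have "x \<in> child (pred x) ` {..<q}"
    using bij_betw_child[of "pred x"] unfolding bij_betw_def by auto
  then show "child_index x < q" "child (pred x) (child_index x) = x"
    unfolding child_index_def by (metis inv_into_into lessThan_iff, metis f_inv_into_f)
qed

text \<open>\<open>transport b n x\<close> is the descendant of \<open>b\<close> at depth \<open>n\<close> reached from \<open>b\<close> by the same
  sequence of child indices that leads from \<open>(pred ^^ n) x\<close> down to \<open>x\<close>.\<close>

primrec transport :: "'v \<Rightarrow> nat \<Rightarrow> 'v \<Rightarrow> 'v" where
  "transport b 0 x = b"
| "transport b (Suc n) x = child (transport b n (pred x)) (child_index x)"

lemma pred_transport_Suc: "pred (transport b (Suc n) x) = transport b n (pred x)"
  using pred_child child_index_less by simp

lemma funpow_pred_transport: "(pred ^^ n) (transport b n x) = b"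
proof (induction n arbitrary: x)
  case (Suc n)
  then show ?case
    by (simp only: funpow_Suc_right comp_apply pred_transport_Suc)
qed simp

lemma hor_transport: "hor (transport b n x) = hor b + int n"
  using hor_funpow_pred[of n "transport b n x"] funpow_pred_transport by simp

lemma transport_transport: "(pred ^^ n) x = b \<Longrightarrow> transport b n (transport b' n x) = x"
proof (induction n arbitrary: x)
  case (Suc n)
  have "transport b n (pred (transport b' (Suc n) x)) = pred x"
    using Suc.IH Suc.prems unfolding pred_transport_Suc by (simp add: funpow_Suc_right del: funpow.simps)
  moreover have "child_index (transport b' (Suc n) x) = child_index x"
    using child_index_child child_index_less by simp
  ultimately show ?case
    using child_child_index by simp
qed simp

definition swap_subtrees :: "'v \<Rightarrow> 'v \<Rightarrow> 'v \<Rightarrow> 'v" where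
  "swap_subtrees a a' x =
     (if anc pred x a then transport a' (nat (hor x - hor a)) x
      else if anc pred x a' then transport a (nat (hor x - hor a')) x
      else x)"

lemma swap_subtrees_outside: "\<not> anc pred x a \<Longrightarrow> \<not> anc pred x a' \<Longrightarrow> swap_subtrees a a' x = x"
  unfolding swap_subtrees_def by simp

lemma not_anc_if_anc_same_hor: "hor a = hor a' \<Longrightarrow> a \<noteq> a' \<Longrightarrow> anc pred x a \<Longrightarrow> \<not> anc pred x a'"
  using anc_eq_if_hor_eq by blast

lemma swap_subtrees_commute:
  assumes "hor a = hor a'"
  shows "swap_subtrees a a' = swap_subtrees a' a"
proof
  fix x
  show "swap_subtrees a a' x = swap_subtrees a' a x"
  proof (cases "a = a'")
    case False
    then show ?thesis
      using not_anc_if_anc_same_hor[OF assms False, of x] not_anc_if_anc_same_hor[OF assms[symmetric], of x]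
      unfolding swap_subtrees_def by auto
  qed simp
qed

lemma swap_subtrees_below:
  assumes "anc pred x a"
  shows "swap_subtrees a a' x = transport a' (nat (hor x - hor a)) x"
    and "anc pred (swap_subtrees a a' x) a'"
  using assms funpow_pred_transport[of _ a'] unfolding swap_subtrees_def anc_def by auto

lemma hor_swap_subtrees_below:
  assumes "anc pred x a" "hor a = hor a'"
  shows "hor (swap_subtrees a a' x) = hor x"
  using anc_hor_le[OF assms(1)] assms(2) unfolding swap_subtrees_below(1)[OF assms(1)] hor_transport
  by simp

lemma swap_subtrees_swap_subtrees_below:
  assumes x: "anc pred x a" and "hor a = hor a'" "a \<noteq> a'"
  shows "swap_subtrees a a' (swap_subtrees a a' x) = x"
proof -
  let ?y = "swap_subtrees a a' x"
  have "anc pred ?y a'"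
    using x by (rule swap_subtrees_below(2))
  moreover have "hor ?y = hor x"
    using assms(1,2) by (rule hor_swap_subtrees_below)
  ultimately have "swap_subtrees a a' ?y = transport a (nat (hor x - hor a)) ?y"
    using swap_subtrees_below(1)[OF \<open>anc pred ?y a'\<close>] swap_subtrees_commute[OF assms(2)] assms(2) by simp
  also have "\<dots> = x"
    unfolding swap_subtrees_below(1)[OF x]
    by (rule transport_transport[OF anc_eq_funpow_pred[OF x, symmetric]])
  finally show ?thesis .
qed

lemma swap_subtrees_swap_subtrees:
  assumes "hor a = hor a'" "a \<noteq> a'"
  shows "swap_subtrees a a' (swap_subtrees a a' x) = x"
proof -
  consider "anc pred x a" | "anc pred x a'" | "\<not> anc pred x a" "\<not> anc pred x a'"
    by blast
  then show ?thesis
  proof cases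
    case 1
    then show ?thesis
      using assms by (rule swap_subtrees_swap_subtrees_below)
  next
    case 2
    then show ?thesis
      using swap_subtrees_swap_subtrees_below[of x a' a] assms swap_subtrees_commute[OF assms(1)] by simp
  next
    case 3
    then show ?thesis
      by (simp add: swap_subtrees_outside)
  qed
qed

lemma hor_eq_if_siblings: "pred a = pred a' \<Longrightarrow> hor a = hor a'"
  using hor_pred[of a] hor_pred[of a'] by simp

lemma not_anc_pred_self: "\<not> anc pred (pred a) a"
  using anc_hor_le[of "pred a" a] hor_pred[of a] by auto

lemma swap_subtrees_pred_below:
  assumes x: "anc pred x a" and sib: "pred a = pred a'" and "a \<noteq> a'"
  shows "swap_subtrees a a' (pred x) = pred (swap_subtrees a a' x)"
proof (cases "x = a")
  case True
  have "\<not> anc pred (pred a) a" "\<not> anc pred (pred a) a'"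
    using not_anc_pred_self[of a] not_anc_pred_self[of a'] sib by simp_all
  then show ?thesis
    using True sib swap_subtrees_outside swap_subtrees_below(1)[OF anc_refl, of a a'] by simp
next
  case False
  define n where "n = nat (hor x - hor a) - 1"
  have "hor a \<noteq> hor x"
    using anc_eq_if_hor_eq[OF anc_refl x] False by auto
  then have n: "nat (hor x - hor a) = Suc n"
    using anc_hor_le[OF x] unfolding n_def by simp
  then have "(pred ^^ n) (pred x) = a"
    using anc_eq_funpow_pred[OF x] by (simp add: funpow_Suc_right del: funpow.simps)
  then have pred_x: "anc pred (pred x) a"
    unfolding anc_def by blast
  have "nat (hor (pred x) - hor a) = n"
    using n hor_pred[of x] by (auto simp: nat_eq_iff split: if_splits)
  then have "swap_subtrees a a' (pred x) = transport a' n (pred x)"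
    using swap_subtrees_below(1)[OF pred_x] by simp
  also have "\<dots> = pred (swap_subtrees a a' x)"
    using swap_subtrees_below(1)[OF x] n pred_transport_Suc by simp
  finally show ?thesis .
qed

lemma swap_subtrees_in_Aff:
  assumes sib: "pred a = pred a'" and "a \<noteq> a'"
  shows "swap_subtrees a a' \<in> Aff pred"
proof -
  have hor_eq: "hor a = hor a'"
    using sib by (rule hor_eq_if_siblings)
  have "bij (swap_subtrees a a')"
    using swap_subtrees_swap_subtrees[OF hor_eq \<open>a \<noteq> a'\<close>]
    by (intro o_bij[of "swap_subtrees a a'"]) (simp_all add: fun_eq_iff)
  moreover have "swap_subtrees a a' (pred x) = pred (swap_subtrees a a' x)" for x
  proof -
    consider "anc pred x a" | "anc pred x a'" | "\<not> anc pred x a" "\<not> anc pred x a'"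
      by blast
    then show ?thesis
    proof cases
      case 1
      then show ?thesis
        using sib \<open>a \<noteq> a'\<close> by (rule swap_subtrees_pred_below)
    next
      case 2
      show ?thesis
        using swap_subtrees_pred_below[OF 2 sib[symmetric] \<open>a \<noteq> a'\<close>[symmetric]]
        unfolding swap_subtrees_commute[OF hor_eq] .
    next
      case 3
      then have "\<not> anc pred (pred x) a" "\<not> anc pred (pred x) a'"
        using anc_trans[OF anc_pred[of pred x]] by auto
      then show ?thesis
        using 3 swap_subtrees_outside by simp
    qed
  qed
  ultimately show ?thesis
    unfolding Aff_def by blast
qed

lemma ex_Aff_moving_within_subtrees:
  "(pred ^^ Suc d) y = (pred ^^ Suc d) y' \<Longrightarrow>
   \<exists>h\<in>Aff pred. h y = y' \<and>
     (\<forall>x. \<not> anc pred x ((pred ^^ d) y) \<and> \<not> anc pred x ((pred ^^ d) y') \<longrightarrow> h x = x)"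
proof (induction d arbitrary: y y')
  case 0
  show ?case
  proof (cases "y = y'")
    case True
    then show ?thesis
      using id_in_Aff by (intro bexI[of _ id]) auto
  next
    case False
    then show ?thesis
      using 0 swap_subtrees_in_Aff[of y y'] swap_subtrees_outside swap_subtrees_below(1)[OF anc_refl, of y y']
      by (intro bexI[of _ "swap_subtrees y y'"]) auto
  qed
next
  case (Suc d)
  define a where "a = (pred ^^ Suc d) y"
  define a' where "a' = (pred ^^ Suc d) y'"
  have below_Suc: "anc pred x ((pred ^^ d) z) \<Longrightarrow> anc pred x ((pred ^^ Suc d) z)" for x z
    using anc_trans[OF _ anc_pred] by simp
  show ?case
  proof (cases "a = a'")
    case True
    then show ?thesis
      using Suc.IH[of y y'] below_Suc unfolding a_def a'_def by blast
  next
    case False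
    txt \<open>Swap the sibling subtrees at \<open>a\<close> and \<open>a'\<close>, then move \<open>?s y\<close> to \<open>y'\<close> inside the
      subtree at \<open>a'\<close>.\<close>
    let ?s = "swap_subtrees a a'"
    have sib: "pred a = pred a'"
      using Suc.prems unfolding a_def a'_def by simp
    have s: "?s \<in> Aff pred" "?s a = a'" "\<And>x. \<not> anc pred x a \<Longrightarrow> \<not> anc pred x a' \<Longrightarrow> ?s x = x"
      using swap_subtrees_in_Aff[OF sib False] swap_subtrees_below(1)[OF anc_refl, of a a']
        swap_subtrees_outside by auto
    have "(pred ^^ Suc d) (?s y) = a'"
      using Aff_funpow_pred[OF s(1)] s(2) unfolding a_def by metis
    then obtain h where h: "h \<in> Aff pred" "h (?s y) = y'"
      "\<And>x. \<not> anc pred x ((pred ^^ d) (?s y)) \<Longrightarrow> \<not> anc pred x ((pred ^^ d) y') \<Longrightarrow> h x = x"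
      using Suc.IH[of "?s y" y'] unfolding a'_def by blast
    have "anc pred x a'" if "anc pred x ((pred ^^ d) (?s y)) \<or> anc pred x ((pred ^^ d) y')" for x
      using that below_Suc \<open>(pred ^^ Suc d) (?s y) = a'\<close> unfolding a'_def by metis
    then have "\<forall>x. \<not> anc pred x a \<and> \<not> anc pred x a' \<longrightarrow> (h \<circ> ?s) x = x"
      using h(3) s(3) by auto
    moreover have "(h \<circ> ?s) y = y'"
      using h(2) by simp
    ultimately show ?thesis
      using Aff_comp[OF h(1) s(1)] unfolding a_def a'_def by blast
  qed
qed

lemma Aff_stabilizer_transitive_on_Tkr:
  assumes r: "r \<ge> 1" and y: "y \<in> Tkr pred hor k r x" and y': "y' \<in> Tkr pred hor k r x"
  shows "\<exists>h\<in>Aff pred. h x = x \<and> h y = y'"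
proof -
  obtain d where d: "r = Suc d"
    using r by (cases r) auto
  then have "(pred ^^ Suc d) y = (pred ^^ Suc d) y'"
    using funpow_pred_Tkr[OF y] funpow_pred_Tkr[OF y'] by simp
  then obtain h where h: "h \<in> Aff pred" "h y = y'"
    "\<forall>v. \<not> anc pred v ((pred ^^ d) y) \<and> \<not> anc pred v ((pred ^^ d) y') \<longrightarrow> h v = v"
    using ex_Aff_moving_within_subtrees[OF \<open>(pred ^^ Suc d) y = (pred ^^ Suc d) y'\<close>] by blast
  have outside: "\<not> anc pred x ((pred ^^ d) z)" if z: "z \<in> Tkr pred hor k r x" for z
  proof
    assume "anc pred x ((pred ^^ d) z)"
    then have "hor ((pred ^^ d) z) \<le> hor (wedge pred hor x z)"
      by (rule hor_le_wedge[OF _ anc_funpow])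
    moreover have "hor z = hor (wedge pred hor x z) + int r"
      using z unfolding mem_Tkr_iff by blast
    ultimately show False
      using hor_funpow_pred[of d z] d by simp
  qed
  have "h x = x"
    using h(3) outside[OF y] outside[OF y'] by blast
  then show ?thesis
    using h(1,2) by blast
qed

section \<open>Invariance of \<open>\<nu>\<close> under the stabilizer of the root\<close>

lemma vimage_ends_through_Aff:
  assumes h: "h \<in> Aff pred" and g: "g \<in> Aff pred"
  shows "(\<lambda>\<xi>. (h \<circ> g) ` \<xi>) -` ends_through (h y) \<inter> ends_star pred
       = (\<lambda>\<xi>. g ` \<xi>) -` ends_through y \<inter> ends_star pred"
proof -
  have "h y \<in> (h \<circ> g) ` \<xi> \<longleftrightarrow> y \<in> g ` \<xi>" for \<xi>
    using bij_is_inj[OF AffD(1)[OF h]] by (auto simp: image_comp[symmetric] dest: injD)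
  then show ?thesis
    unfolding ends_through_def
    using Aff_image_ends_star[OF g] Aff_image_ends_star[OF Aff_comp[OF h g]] by auto
qed

lemma emeasure_ends_through_Aff_stabilizer:
  assumes H: "haar pred rt H" and \<nu>: "radon_ends pred \<nu>" and inv: "mu_invariant pred rt p H \<nu>"
    and iso: "semi_isotropic pred hor p" and h: "h \<in> Aff pred" "h rt = rt"
  shows "emeasure \<nu> (ends_through (h y)) = emeasure \<nu> (ends_through y)"
proof -
  define f where "f w g = emeasure \<nu> ((\<lambda>\<xi>. g ` \<xi>) -` ends_through w \<inter> ends_star pred) * ennreal (p rt (g rt))"
    for w and g :: "'v \<Rightarrow> 'v"
  have "conv pred rt p H \<nu> (ends_through w) = emeasure \<nu> (ends_through w)" for w
    using inv ends_through_in_sets[OF \<nu>] unfolding mu_invariant_def by blast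
  then have emeasure_eq: "emeasure \<nu> (ends_through w) = integral\<^sup>N H (f w)" for w
    unfolding conv_def f_def by simp
  have "f (h y) (h \<circ> g) = f y g" if g: "g \<in> Aff pred" for g
  proof -
    have "up pred hor rt (h (g rt)) = up pred hor rt (g rt)" "up pred hor (h (g rt)) rt = up pred hor (g rt) rt"
      using Aff_up[OF h, of rt "g rt"] Aff_up[OF h, of "g rt" rt] h(2) by simp_all
    then have "p rt (h (g rt)) = p rt (g rt)"
      using iso unfolding semi_isotropic_def by blast
    then show ?thesis
      unfolding f_def vimage_ends_through_Aff[OF h(1) g] by simp
  qed
  then have "integral\<^sup>N H (\<lambda>g. f (h y) (h \<circ> g)) = integral\<^sup>N H (f y)"
    using haarD(1)[OF H] by (intro nn_integral_cong) auto
  then show ?thesis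
    using emeasure_eq nn_integral_haar_left_translation[OF H h(1)] by simp
qed

end

theorem lemma4p2:
  fixes q :: nat and pred :: "'v \<Rightarrow> 'v" and rt :: 'v and hor :: "'v \<Rightarrow> int"
    and p :: "'v \<Rightarrow> 'v \<Rightarrow> real" and H :: "('v \<Rightarrow> 'v) measure" and \<nu> :: "'v set measure"
  assumes "q \<ge> 2"
    and "tree_with_end q pred"
    and "is_hor pred rt hor"
    and "stochastic p" and "irreducible_P p" and "semi_isotropic pred hor p"
    and "haar pred rt H"
    and "radon_ends pred \<nu>"
    and "mu_invariant pred rt p H \<nu>"
    and "r \<ge> 1"
    and "y \<in> Tkr pred hor k r rt"
  shows "emeasure \<nu> (Omega pred hor 0 y) = emeasure \<nu> (Omega pred hor k rt) / of_nat (card (Tkr pred hor k r rt))"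
proof -
  interpret horocyclic_tree q pred rt hor
    using assms(2,3) by unfold_locales
  let ?T = "Tkr pred hor k r rt"
  have same_measure: "emeasure \<nu> (ends_through y') = emeasure \<nu> (ends_through y)" if y': "y' \<in> ?T" for y'
  proof -
    obtain h where "h \<in> Aff pred" "h rt = rt" "h y = y'"
      using Aff_stabilizer_transitive_on_Tkr[OF assms(10,11) y'] by blast
    then show ?thesis
      using emeasure_ends_through_Aff_stabilizer[OF assms(7,8,9,6)] by blast
  qed
  have "emeasure \<nu> (Omega pred hor k rt) = (\<Sum>y'\<in>?T. emeasure \<nu> (ends_through y'))"
    unfolding Omega_eq_UN_Tkr[OF assms(10)]
    using ends_through_in_sets[OF assms(8)] disjoint_family_ends_through_Tkr finite_Tkr
    by (intro sum_emeasure[symmetric]) auto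
  also have "\<dots> = of_nat (card ?T) * emeasure \<nu> (ends_through y)"
    using same_measure by simp
  moreover have "card ?T \<noteq> 0"
    using finite_Tkr assms(11) by auto
  ultimately show ?thesis
    unfolding Omega_0_eq_ends_through by (simp add: ennreal_mult_divide_eq mult.commute)
qed

end
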